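(* Let $q\equiv 3\pmod 4$ be a prime power, let $P=\{(x,y,z)\in\mathbb{F}_q^3 : z=x^2+y^2\}$, and let $a,b,c,d\in P$. Then $a+b=c+d$ if and only if $\underline{a},\underline{c},\underline{b},\underline{d}$ (in this cyclic order) form a rectangle in $\mathbb{F}_q^2$.
   Context: Every point of $P$ is written as $x=(\underline{x},\underline{x}\cdot\underline{x})$ with $\underline{x}\in\mathbb{F}_q^2$, where $u\cdot v=u_1v_1+u_2v_2$. Four points $x,z,y,t\in\mathbb{F}_q^2$ form a rectangle with vertices in the cyclic order $x,z,y,t$ if $(x-z)\cdot(y-z)=0$, $(z-y)\cdot(t-y)=0$, $(y-t)\cdot(x-t)=0$ and $(t-x)\cdot(z-x)=0$ (right angles at every vertex). *)

theory Defs
  imports Main "HOL-Library.Product_Plus"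
begin

definition dot2 :: "'a::comm_ring \<times> 'a \<Rightarrow> 'a \<times> 'a \<Rightarrow> 'a" where
  "dot2 u v = fst u * fst v + snd u * snd v"

definition rectangle :: "'a::comm_ring \<times> 'a \<Rightarrow> 'a \<times> 'a \<Rightarrow> 'a \<times> 'a \<Rightarrow> 'a \<times> 'a \<Rightarrow> bool" where
  "rectangle x z y t \<longleftrightarrow>
     dot2 (x - z) (y - z) = 0 \<and> dot2 (z - y) (t - y) = 0 \<and>
     dot2 (y - t) (x - t) = 0 \<and> dot2 (t - x) (z - x) = 0"

definition paraboloid :: "('a::comm_ring_1 \<times> 'a \<times> 'a) set" where
  "paraboloid = {(x, y, z). z = x\<^sup>2 + y\<^sup>2}"

definition ul :: "'a \<times> 'a \<times> 'a \<Rightarrow> 'a \<times> 'a" where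
  "ul p = (fst p, fst (snd p))"

end

theory Submission
  imports Defs
begin

text \<open>Over a field with \<open>q \<equiv> 3 (mod 4)\<close> elements, \<open>2 \<noteq> 0\<close> and \<open>-1\<close> is not a square, so the
  form \<open>u \<cdot> u\<close> is anisotropic. For points of the paraboloid, \<open>a + b = c + d\<close> says that
  \<open>d = a + b - c\<close> in the plane and \<open>|a|\<^sup>2 + |b|\<^sup>2 = |c|\<^sup>2 + |d|\<^sup>2\<close>; given the first, the second
  is the right angle \<open>(a - c) \<cdot> (b - c) = 0\<close>. Conversely, the four right angles of a rectangle
  force \<open>|d - (a + b - c)|\<^sup>2 = 0\<close>, hence \<open>d = a + b - c\<close> by anisotropy.\<close>

lemma of_nat_card_UNIV_eq_0: "of_nat (card (UNIV :: 'a::{finite, ring_1} set)) = (0::'a)"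
proof -
  have "(\<Sum>x\<in>(UNIV::'a set). x + 1) = (\<Sum>x\<in>UNIV. x)"
    by (rule sum.reindex_bij_witness[where i="\<lambda>x. x - 1" and j="\<lambda>x. x + 1"]) auto
  then show ?thesis
    by (simp add: sum.distrib)
qed

lemma two_neq_zero_if_odd_card:
  assumes "odd (card (UNIV :: 'a::{finite, ring_1} set))"
  shows "(2::'a) \<noteq> 0"
proof
  assume two: "(2::'a) = 0"
  obtain k where "card (UNIV :: 'a set) = 2 * k + 1"
    using assms oddE by blast
  then have "(2::'a) * of_nat k + 1 = 0"
    using of_nat_card_UNIV_eq_0[where 'a='a] by (simp add: add.commute)
  then show False
    using two by simp
qed

lemma power_card_minus_one_eq_one:
  fixes x :: "'a::{finite, field}"
  assumes "x \<noteq> 0"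
  shows "x ^ (card (UNIV :: 'a set) - 1) = 1"
proof -
  let ?U = "UNIV - {0::'a}"
  have "(\<Prod>y\<in>?U. x * y) = (\<Prod>y\<in>?U. y)"
    by (rule prod.reindex_bij_witness[where i="\<lambda>y. y / x" and j="\<lambda>y. x * y"]) (use assms in auto)
  moreover have "card ?U = card (UNIV :: 'a set) - 1"
    by (simp add: card_Diff_singleton)
  ultimately show ?thesis
    by (simp add: prod.distrib)
qed

lemma minus_one_not_square:
  fixes i :: "'a::{finite, field}"
  assumes q: "card (UNIV :: 'a set) mod 4 = 3"
  shows "i * i \<noteq> -1"
proof
  assume i: "i * i = -1"
  obtain k where k: "card (UNIV :: 'a set) - 1 = 2 * (2 * k + 1)"
    using q by (intro that[of "card (UNIV :: 'a set) div 4"]) presburger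
  have "i \<noteq> 0"
    using i by auto
  then have "1 = i ^ (card (UNIV :: 'a set) - 1)"
    by (rule power_card_minus_one_eq_one[symmetric])
  also have "\<dots> = -1"
    unfolding k power_mult power2_eq_square using i by simp
  finally have "(2::'a) = 0"
    by simp
  moreover have "odd (card (UNIV :: 'a set))"
    using q by presburger
  ultimately show False
    using two_neq_zero_if_odd_card by blast
qed

lemma dot2_self_eq_0_iff:
  fixes u :: "'a::{finite, field} \<times> 'a"
  assumes q: "card (UNIV :: 'a set) mod 4 = 3"
  shows "dot2 u u = 0 \<longleftrightarrow> u = 0"
proof
  assume u: "dot2 u u = 0"
  obtain x y where xy: "u = (x, y)"
    by fastforce
  have "x = 0"
  proof (rule ccontr)
    assume "x \<noteq> 0"
    then have "(y / x) * (y / x) = -1"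
      using u by (simp add: xy dot2_def field_simps add_eq_0_iff)
    then show False
      using minus_one_not_square[OF q] by blast
  qed
  then show "u = 0"
    using u by (simp add: xy dot2_def zero_prod_def)
qed (simp add: dot2_def)

lemma rectangle_with_parallelogram_vertex_iff:
  fixes x y z :: "'a::comm_ring \<times> 'a"
  shows "rectangle x z y (x + y - z) \<longleftrightarrow> dot2 (x - z) (y - z) = 0"
  unfolding rectangle_def dot2_def by (auto simp: algebra_simps)

lemma rectangle_imp_dot2_self_eq_0:
  fixes x y z t :: "'a::comm_ring \<times> 'a"
  assumes "rectangle x z y t"
  shows "dot2 (t - (x + y - z)) (t - (x + y - z)) = 0"
proof -
  have "dot2 (t - (x + y - z)) (t - (x + y - z)) =
      dot2 (x - z) (y - z) + dot2 (z - y) (t - y) + dot2 (y - t) (x - t) + dot2 (t - x) (z - x)"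
    unfolding dot2_def by (simp add: algebra_simps)
  with assms show ?thesis
    unfolding rectangle_def by simp
qed

lemma rectangle_iff_parallelogram_right_angle:
  fixes x y z t :: "'a::comm_ring \<times> 'a"
  assumes anisotropic: "\<And>u::'a \<times> 'a. dot2 u u = 0 \<Longrightarrow> u = 0"
  shows "rectangle x z y t \<longleftrightarrow> t = x + y - z \<and> dot2 (x - z) (y - z) = 0"
proof
  assume rect: "rectangle x z y t"
  then have "t = x + y - z"
    using anisotropic[OF rectangle_imp_dot2_self_eq_0] by simp
  with rect show "t = x + y - z \<and> dot2 (x - z) (y - z) = 0"
    using rectangle_with_parallelogram_vertex_iff by blast
qed (use rectangle_with_parallelogram_vertex_iff in blast)

lemma dot2_self_parallelogram:
  fixes x y z :: "'a::comm_ring_1 \<times> 'a"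
  shows "dot2 (x + y - z) (x + y - z) + dot2 z z = dot2 x x + dot2 y y + 2 * dot2 (x - z) (y - z)"
  unfolding dot2_def by (simp add: algebra_simps)

lemma add_eq_add_iff_ul:
  fixes a b c d :: "'a::ab_group_add \<times> 'a \<times> 'a"
  shows "a + b = c + d \<longleftrightarrow>
    ul d = ul a + ul b - ul c \<and> snd (snd a) + snd (snd b) = snd (snd c) + snd (snd d)"
  by (auto simp: ul_def prod_eq_iff algebra_simps)

lemma paraboloid_height: "p \<in> paraboloid \<Longrightarrow> snd (snd p) = dot2 (ul p) (ul p)"
  unfolding paraboloid_def ul_def dot2_def by (auto simp: power2_eq_square)

lemma paraboloid_add_eq_add_iff:
  fixes a b c d :: "'a::idom \<times> 'a \<times> 'a"
  assumes two: "(2::'a) \<noteq> 0"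
    and P: "a \<in> paraboloid" "b \<in> paraboloid" "c \<in> paraboloid" "d \<in> paraboloid"
  shows "a + b = c + d \<longleftrightarrow> ul d = ul a + ul b - ul c \<and> dot2 (ul a - ul c) (ul b - ul c) = 0"
  using two dot2_self_parallelogram[of "ul a" "ul b" "ul c"]
  unfolding add_eq_add_iff_ul paraboloid_height[OF P(1)] paraboloid_height[OF P(2)]
    paraboloid_height[OF P(3)] paraboloid_height[OF P(4)]
  by (auto simp: add.commute)

theorem lemma2p1:
  fixes a b c d :: "'a::{finite, field} \<times> 'a \<times> 'a"
  assumes q: "card (UNIV :: 'a set) mod 4 = 3"
    and P: "a \<in> paraboloid" "b \<in> paraboloid" "c \<in> paraboloid" "d \<in> paraboloid"
  shows "a + b = c + d \<longleftrightarrow> rectangle (ul a) (ul c) (ul b) (ul d)"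
proof -
  have "odd (card (UNIV :: 'a set))"
    using q by presburger
  then have "(2::'a) \<noteq> 0"
    by (rule two_neq_zero_if_odd_card)
  then show ?thesis
    using paraboloid_add_eq_add_iff[OF _ P] rectangle_iff_parallelogram_right_angle
      dot2_self_eq_0_iff[OF q] by blast
qed

end
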